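(* Let $f:\mathbb{Z}^n\to\mathbb{R}\cup\{+\infty\}$ be a function satisfying condition (SSQM$^\natural$) with $\arg\min f\neq\emptyset$, and let $x\in\mathrm{dom}\,f$ with $x\notin\arg\min f$. Let $(i,j)$ be a pair of distinct elements of $N\cup\{0\}$ minimizing the value $f(x-\chi_i+\chi_j)$. Then there exists a minimizer $x^*$ of $f$ satisfying: - if $i,j\in N$: $x^*(i)\le x(i)-1$ and $x^*(j)\ge x(j)+1$; - if $i\in N$ and $j=0$: $x^*(i)\le x(i)-1$; - if $i=0$ and $j\in N$: $x^*(j)\ge x(j)+1$.
   Context: $N=\{1,\dots,n\}$. For $i\in N$, $\chi_i\in\{0,1\}^n$ is the characteristic vector of $i$, and $\chi_0=0$. $\mathrm{dom}\,f=\{x\in\mathbb{Z}^n\mid f(x)<+\infty\}$. For $x,y\in\mathbb{Z}^n$, $\mathrm{supp}^+(x-y)=\{i\in N\mid x(i)>y(i)\}$ and $\mathrm{supp}^-(x-y)=\{j\in N\mid x(j)<y(j)\}$. Condition (SSQM$^\natural$): for all $x,y\in\mathrm{dom}\,f$ and all $i\in\mathrm{supp}^+(x-y)$ there exists $j\in\mathrm{supp}^-(x-y)\cup\{0\}$ such that at least one of the following holds: (a) $f(x-\chi_i+\chi_j)<f(x)$; (b) $f(y+\chi_i-\chi_j)<f(y)$; (c) $f(x-\chi_i+\chi_j)=f(x)$ and $f(y+\chi_i-\chi_j)=f(y)$. *)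

theory Defs
  imports "HOL-Library.Extended_Real"
begin

text \<open>Integer vectors in Z^n are represented as functions nat => int, indexed by
  N = {1..n}, and vanishing outside N. Index 0 is reserved for chi_0 = 0.\<close>

definition zvecs :: "nat \<Rightarrow> (nat \<Rightarrow> int) set" where
  "zvecs n = {x. \<forall>k. k \<notin> {1..n} \<longrightarrow> x k = 0}"

definition chi :: "nat \<Rightarrow> nat \<Rightarrow> int" where
  "chi i = (\<lambda>k. if i \<noteq> 0 \<and> k = i then 1 else 0)"

definition fdom :: "nat \<Rightarrow> ((nat \<Rightarrow> int) \<Rightarrow> ereal) \<Rightarrow> (nat \<Rightarrow> int) set" where
  "fdom n f = {x \<in> zvecs n. f x < \<infinity>}"

definition argmin_f :: "nat \<Rightarrow> ((nat \<Rightarrow> int) \<Rightarrow> ereal) \<Rightarrow> (nat \<Rightarrow> int) set" where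
  "argmin_f n f = {x \<in> zvecs n. \<forall>y \<in> zvecs n. f x \<le> f y}"

definition SSQM_nat :: "nat \<Rightarrow> ((nat \<Rightarrow> int) \<Rightarrow> ereal) \<Rightarrow> bool" where
  "SSQM_nat n f \<longleftrightarrow>
     (\<forall>x \<in> fdom n f. \<forall>y \<in> fdom n f. \<forall>i \<in> {1..n}. y i < x i \<longrightarrow>
        (\<exists>j \<in> {j \<in> {1..n}. x j < y j} \<union> {0}.
           f (\<lambda>k. x k - chi i k + chi j k) < f x \<or>
           f (\<lambda>k. y k + chi i k - chi j k) < f y \<or>
           (f (\<lambda>k. x k - chi i k + chi j k) = f x \<and> f (\<lambda>k. y k + chi i k - chi j k) = f y)))"

end

theory Submission
  imports Defs
begin

text \<open>Choose a minimizer \<open>x\<^sup>*\<close> nearest (in the \<open>\<ell>\<^sub>1\<close>-distance) to a point \<open>y\<close> of \<open>dom f\<close>.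
  For every coordinate where \<open>x\<^sup>*\<close> and \<open>y\<close> differ, (SSQM\<open>\<^sup>\<natural>\<close>) offers an exchange; on the side
  of \<open>x\<^sup>*\<close> it would produce a minimizer strictly closer to \<open>y\<close>, so the exchange must strictly
  decrease \<open>f\<close> at \<open>y\<close>. With \<open>y = x\<close> this shows that the best exchange \<open>y = x - \<chi>\<^sub>i + \<chi>\<^sub>j\<close> is
  improving; with this \<open>y\<close>, an improving exchange at \<open>y\<close> that undoes the move of \<open>i\<close> or of
  \<open>j\<close> would be an exchange at \<open>x\<close> better than the best one, which forces
  \<open>x\<^sup>*(i) \<le> y(i) = x(i) - 1\<close> and \<open>x\<^sup>*(j) \<ge> y(j) = x(j) + 1\<close>.\<close>

definition exchange :: "(nat \<Rightarrow> int) \<Rightarrow> nat \<Rightarrow> nat \<Rightarrow> nat \<Rightarrow> int" where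
  "exchange x a b = (\<lambda>k. x k - chi a k + chi b k)"

definition l1_dist :: "nat \<Rightarrow> (nat \<Rightarrow> int) \<Rightarrow> (nat \<Rightarrow> int) \<Rightarrow> nat" where
  "l1_dist n w t = (\<Sum>m\<in>{1..n}. nat \<bar>w m - t m\<bar>)"

lemma exchange_same [simp]: "exchange x a a = x"
  by (simp add: exchange_def)

lemma exchange_undo_first: "exchange (exchange x a b) c a = exchange x c b"
  by (simp add: exchange_def fun_eq_iff algebra_simps)

lemma exchange_undo_second: "exchange (exchange x a b) b c = exchange x a c"
  by (simp add: exchange_def fun_eq_iff algebra_simps)

lemma exchange_in_zvecs:
  assumes "w \<in> zvecs n" "a \<in> {0..n}" "b \<in> {0..n}"
  shows "exchange w a b \<in> zvecs n"
  using assms by (auto simp: zvecs_def chi_def exchange_def)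

lemma SSQM_natD:
  assumes "SSQM_nat n f" "x \<in> fdom n f" "y \<in> fdom n f" "i \<in> {1..n}" "y i < x i"
  obtains j where "j = 0 \<or> (j \<in> {1..n} \<and> x j < y j)"
    and "f (exchange x i j) < f x \<or> f (exchange y j i) < f y \<or>
         (f (exchange x i j) = f x \<and> f (exchange y j i) = f y)"
proof -
  have "\<exists>j \<in> {j \<in> {1..n}. x j < y j} \<union> {0}.
           f (\<lambda>k. x k - chi i k + chi j k) < f x \<or>
           f (\<lambda>k. y k + chi i k - chi j k) < f y \<or>
           (f (\<lambda>k. x k - chi i k + chi j k) = f x \<and> f (\<lambda>k. y k + chi i k - chi j k) = f y)"
    using assms unfolding SSQM_nat_def by blast
  moreover have "(\<lambda>k. y k + chi i k - chi j k) = exchange y j i" for j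
    by (auto simp: exchange_def)
  ultimately show ?thesis
    using that unfolding exchange_def[symmetric] by auto
qed

lemma argmin_f_subset_fdom:
  assumes "fdom n f \<noteq> {}"
  shows "argmin_f n f \<subseteq> fdom n f"
proof
  fix z assume z: "z \<in> argmin_f n f"
  obtain x where "x \<in> fdom n f" using assms by blast
  with z have "f z \<le> f x" "f x < \<infinity>" by (auto simp: argmin_f_def fdom_def)
  with z show "z \<in> fdom n f" by (auto simp: argmin_f_def fdom_def)
qed

lemma nearest_minimizer_exists:
  assumes "argmin_f n f \<noteq> {}"
  obtains xs where "xs \<in> argmin_f n f" "\<forall>z \<in> argmin_f n f. l1_dist n xs t \<le> l1_dist n z t"
  using assms ex_has_least_nat[of "\<lambda>z. z \<in> argmin_f n f" _ "\<lambda>z. l1_dist n z t"] by blast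

lemma l1_dist_exchange_less:
  assumes "a \<in> {0..n}" "b \<in> {0..n}" "a \<noteq> 0 \<or> b \<noteq> 0"
    and a: "a = 0 \<or> t a < w a" and b: "b = 0 \<or> w b < t b"
  shows "l1_dist n (exchange w a b) t < l1_dist n w t"
  unfolding l1_dist_def
proof (rule sum_strict_mono_ex1)
  have "a \<noteq> b" using assms by auto
  have at_a: "exchange w a b a = w a - 1" if "a \<noteq> 0"
    using that \<open>a \<noteq> b\<close> by (simp add: exchange_def chi_def)
  have at_b: "exchange w a b b = w b + 1" if "b \<noteq> 0"
    using that \<open>a \<noteq> b\<close> by (simp add: exchange_def chi_def)
  have elsewhere: "exchange w a b m = w m" if "m \<noteq> a" "m \<noteq> b" for m
    using that by (simp add: exchange_def chi_def)
  have le: "nat \<bar>exchange w a b m - t m\<bar> \<le> nat \<bar>w m - t m\<bar>" if "m \<noteq> 0" for m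
    using a b at_a at_b elsewhere[of m] that by (cases "m = a"; cases "m = b") auto
  then show "\<forall>m \<in> {1..n}. nat \<bar>exchange w a b m - t m\<bar> \<le> nat \<bar>w m - t m\<bar>"
    by simp
  show "\<exists>m \<in> {1..n}. nat \<bar>exchange w a b m - t m\<bar> < nat \<bar>w m - t m\<bar>"
  proof (cases "a = 0")
    case True
    then show ?thesis using assms at_b by (intro bexI[of _ b]) auto
  next
    case False
    then show ?thesis using assms at_a by (intro bexI[of _ a]) auto
  qed
qed simp

text \<open>The moved point is strictly closer to \<open>t\<close>, so it cannot be a minimizer.\<close>

lemma nearest_minimizer_exchange_increases:
  assumes xs: "xs \<in> argmin_f n f"
    and nearest: "\<forall>z \<in> argmin_f n f. l1_dist n xs t \<le> l1_dist n z t"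
    and "a \<in> {0..n}" "b \<in> {0..n}" "a \<noteq> 0 \<or> b \<noteq> 0"
    and "a = 0 \<or> t a < xs a" "b = 0 \<or> xs b < t b"
  shows "f xs < f (exchange xs a b)"
proof -
  have moved: "exchange xs a b \<in> zvecs n"
    using xs assms(3,4) by (intro exchange_in_zvecs) (auto simp: argmin_f_def)
  have "exchange xs a b \<notin> argmin_f n f"
    using nearest l1_dist_exchange_less[OF assms(3-7)] by (auto simp: not_le[symmetric])
  moreover have "f xs \<le> f (exchange xs a b)"
    using xs moved by (auto simp: argmin_f_def)
  ultimately show ?thesis
    using xs moved by (auto simp: argmin_f_def order.order_iff_strict)
qed

lemma nearest_minimizer_improving_exchange:
  assumes ssqm: "SSQM_nat n f" and y: "y \<in> fdom n f"
    and xs: "xs \<in> argmin_f n f"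
    and nearest: "\<forall>z \<in> argmin_f n f. l1_dist n xs y \<le> l1_dist n z y"
    and k: "k \<in> {1..n}"
  shows "y k < xs k \<Longrightarrow> \<exists>j \<in> {0..n}. j \<noteq> k \<and> f (exchange y j k) < f y"
    and "xs k < y k \<Longrightarrow> \<exists>j \<in> {0..n}. j \<noteq> k \<and> f (exchange y k j) < f y"
proof -
  have xs_dom: "xs \<in> fdom n f"
    using argmin_f_subset_fdom y xs by blast
  note increases = nearest_minimizer_exchange_increases[OF xs nearest]
  show "\<exists>j \<in> {0..n}. j \<noteq> k \<and> f (exchange y j k) < f y" if "y k < xs k"
  proof -
    obtain j where j: "j = 0 \<or> (j \<in> {1..n} \<and> xs j < y j)"
      and alt: "f (exchange xs k j) < f xs \<or> f (exchange y j k) < f y \<or>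
                (f (exchange xs k j) = f xs \<and> f (exchange y j k) = f y)"
      by (rule SSQM_natD[OF ssqm xs_dom y k \<open>y k < xs k\<close>])
    have "f xs < f (exchange xs k j)"
      using j k \<open>y k < xs k\<close> by (intro increases) auto
    with alt have "f (exchange y j k) < f y" by auto
    moreover have "j \<in> {0..n}" "j \<noteq> k" using j k \<open>y k < xs k\<close> by auto
    ultimately show ?thesis by blast
  qed
  show "\<exists>j \<in> {0..n}. j \<noteq> k \<and> f (exchange y k j) < f y" if "xs k < y k"
  proof -
    obtain j where j: "j = 0 \<or> (j \<in> {1..n} \<and> y j < xs j)"
      and alt: "f (exchange y k j) < f y \<or> f (exchange xs j k) < f xs \<or>
                (f (exchange y k j) = f y \<and> f (exchange xs j k) = f xs)"
      by (rule SSQM_natD[OF ssqm y xs_dom k \<open>xs k < y k\<close>])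
    have "f xs < f (exchange xs j k)"
      using j k \<open>xs k < y k\<close> by (intro increases) auto
    with alt have "f (exchange y k j) < f y" by auto
    moreover have "j \<in> {0..n}" "j \<noteq> k" using j k \<open>xs k < y k\<close> by auto
    ultimately show ?thesis by blast
  qed
qed

lemma improving_exchange_exists:
  assumes ssqm: "SSQM_nat n f" and ne: "argmin_f n f \<noteq> {}"
    and x: "x \<in> fdom n f" and not_min: "x \<notin> argmin_f n f"
  shows "\<exists>a \<in> {0..n}. \<exists>b \<in> {0..n}. a \<noteq> b \<and> f (exchange x a b) < f x"
proof -
  obtain xs where xs: "xs \<in> argmin_f n f"
    and nearest: "\<forall>z \<in> argmin_f n f. l1_dist n xs x \<le> l1_dist n z x"
    using nearest_minimizer_exists[OF ne] by blast
  have "xs \<noteq> x" using xs not_min by blast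
  then obtain k where k: "xs k \<noteq> x k" by blast
  moreover have "k \<in> {1..n}"
  proof (rule ccontr)
    assume "k \<notin> {1..n}"
    then show False using k xs x by (auto simp: argmin_f_def fdom_def zvecs_def)
  qed
  ultimately consider "x k < xs k" | "xs k < x k" by linarith
  then show ?thesis
  proof cases
    case 1
    then obtain c where "c \<in> {0..n}" "c \<noteq> k" "f (exchange x c k) < f x"
      using nearest_minimizer_improving_exchange(1)[OF ssqm x xs nearest \<open>k \<in> {1..n}\<close>] by blast
    with \<open>k \<in> {1..n}\<close> show ?thesis by (metis atLeastAtMost_iff le0)
  next
    case 2
    then obtain c where "c \<in> {0..n}" "c \<noteq> k" "f (exchange x k c) < f x"
      using nearest_minimizer_improving_exchange(2)[OF ssqm x xs nearest \<open>k \<in> {1..n}\<close>] by blast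
    with \<open>k \<in> {1..n}\<close> show ?thesis by (metis atLeastAtMost_iff le0)
  qed
qed

text \<open>Undoing one half of the best exchange yields another exchange at \<open>x\<close>, or \<open>x\<close> itself.\<close>

lemma best_exchange_undo_not_improving:
  fixes f :: "(nat \<Rightarrow> int) \<Rightarrow> 'a::preorder"
  assumes best: "\<forall>a \<in> {0..n}. \<forall>b \<in> {0..n}. a \<noteq> b \<longrightarrow> f (exchange x i j) \<le> f (exchange x a b)"
    and improving: "f (exchange x i j) < f x"
    and "i \<in> {0..n}" "j \<in> {0..n}" "c \<in> {0..n}"
  shows "f (exchange x i j) \<le> f (exchange (exchange x i j) c i)"
    and "f (exchange x i j) \<le> f (exchange (exchange x i j) j c)"
proof -
  have any: "f (exchange x i j) \<le> f (exchange x a b)" if "a \<in> {0..n}" "b \<in> {0..n}" for a b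
  proof (cases "a = b")
    case True
    then show ?thesis using improving by (simp add: less_imp_le)
  next
    case False
    then show ?thesis using best that by blast
  qed
  show "f (exchange x i j) \<le> f (exchange (exchange x i j) c i)"
    using any[of c j] assms(4,5) by (simp add: exchange_undo_first)
  show "f (exchange x i j) \<le> f (exchange (exchange x i j) j c)"
    using any[of i c] assms(3,5) by (simp add: exchange_undo_second)
qed

theorem theorem2p9:
  fixes n :: nat and f :: "(nat \<Rightarrow> int) \<Rightarrow> ereal"
    and x :: "nat \<Rightarrow> int" and i j :: nat
  assumes real_or_inf: "\<forall>z \<in> zvecs n. f z \<noteq> -\<infinity>"
    and ssqm: "SSQM_nat n f"
    and ne: "argmin_f n f \<noteq> {}"
    and xdom: "x \<in> fdom n f"
    and xnot: "x \<notin> argmin_f n f"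
    and ij: "i \<in> {0..n}" "j \<in> {0..n}" "i \<noteq> j"
    and ijmin: "\<forall>i' \<in> {0..n}. \<forall>j' \<in> {0..n}. i' \<noteq> j' \<longrightarrow>
                  f (\<lambda>k. x k - chi i k + chi j k) \<le> f (\<lambda>k. x k - chi i' k + chi j' k)"
  shows "\<exists>xs \<in> argmin_f n f.
           (i \<noteq> 0 \<and> j \<noteq> 0 \<longrightarrow> xs i \<le> x i - 1 \<and> xs j \<ge> x j + 1) \<and>
           (i \<noteq> 0 \<and> j = 0 \<longrightarrow> xs i \<le> x i - 1) \<and>
           (i = 0 \<and> j \<noteq> 0 \<longrightarrow> xs j \<ge> x j + 1)"
proof -
  define y where "y = exchange x i j"
  have best: "\<forall>a \<in> {0..n}. \<forall>b \<in> {0..n}. a \<noteq> b \<longrightarrow> f y \<le> f (exchange x a b)"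
    using ijmin by (simp add: y_def exchange_def)
  have improving: "f y < f x"
    using improving_exchange_exists[OF ssqm ne xdom xnot] best by force
  have y_dom: "y \<in> fdom n f"
    using xdom improving exchange_in_zvecs[OF _ ij(1,2)] by (auto simp: fdom_def y_def)
  obtain xs where xs: "xs \<in> argmin_f n f"
    and nearest: "\<forall>z \<in> argmin_f n f. l1_dist n xs y \<le> l1_dist n z y"
    using nearest_minimizer_exists[OF ne] by blast
  note undo = best_exchange_undo_not_improving[OF best[unfolded y_def] improving[unfolded y_def] ij(1,2)]
  note improve = nearest_minimizer_improving_exchange[OF ssqm y_dom xs nearest]
  have "xs i \<le> y i" if i: "i \<noteq> 0"
  proof (rule ccontr)
    assume "\<not> xs i \<le> y i"
    then obtain c where "c \<in> {0..n}" "f (exchange y c i) < f y"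
      using improve(1)[of i] ij i by force
    then show False using undo(1)[of c] by (simp add: y_def)
  qed
  moreover have "y j \<le> xs j" if j: "j \<noteq> 0"
  proof (rule ccontr)
    assume "\<not> y j \<le> xs j"
    then obtain c where "c \<in> {0..n}" "f (exchange y j c) < f y"
      using improve(2)[of j] ij j by force
    then show False using undo(2)[of c] by (simp add: y_def)
  qed
  ultimately show ?thesis
    using xs ij by (intro bexI[OF _ xs]) (auto simp: y_def exchange_def chi_def)
qed

end
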